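(* Let $\alpha>0$, $\ell>0$, $p\in\mathbb{N}$, and set $a=\frac{1}{1+\alpha}\in(0,1)$, $\theta=\frac{\ell}{1+\alpha}>0$. For every $N\ge1$, the random partition of $\{1,\dots,N\}$ produced at time $N$ by the Chinese restaurant process with competition with parameters $a,\theta,p$ has the same law as the branch partition of $\{1,\dots,N\}$ of the modified GPORT with immigration $\mathcal{T}_{\alpha,\ell}$ with period $p$ after $N$ insertions. (Indeed the two sequences of partitions, indexed by $N$, have the same law.)
   Context: Chinese restaurant process with competition (parameters $0<a<1$, $\theta>0$, $p\in\mathbb{N}$): at time $1$ the partition is $\{\{1\}\}$. For $N\ge1$ write $N=np+k$, $0\le k<p$, and $c_N=N+(n+1)\theta$. Given a partition of $\{1,\dots,N\}$ with $m$ blocks $t_1,\dots,t_m$, element $N+1$ joins block $t_i$ with probability $(|t_i|-a)/c_N$ and forms a new singleton block with probability $((n+1)\theta+ma)/c_N$. Modified GPORT with immigration $\mathcal{T}_{\alpha,\ell}$: at time $0$ there is a single root labelled $0$. At time $N$ the forest has ordinary nodes $1,\dots,N$, the root $0$, and $\lfloor N/p\rfloor$ immigrant roots. Node $N+1$ attaches to an ordinary node $v$ with probability $(d(v)+\alpha)/C_N$ and to a root $v$ (root $0$ or an immigrant root) with probability $(d(v)+\ell)/C_N$, where $d(v)$ is the out-degree and $C_N=(1+\alpha)N+(\lfloor N/p\rfloor+1)\ell$; after node $N+1$ is attached, if $p\mid(N+1)$ a new isolated immigrant root is added. The branch partition of $\{1,\dots,N\}$ has as blocks the label sets of the subtrees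 rooted at the children of the roots. *)

theory Defs
  imports "HOL-Probability.Probability_Mass_Function"
begin

text \<open>One step from time N (partition P of {1..N}) to time N+1.
  The outcome None means "element N+1 opens a new block",
  Some t means "element N+1 joins block t".\<close>

definition crp_weight :: "real \<Rightarrow> real \<Rightarrow> nat \<Rightarrow> nat \<Rightarrow> nat set set \<Rightarrow> nat set option \<Rightarrow> real" where
  "crp_weight a \<theta> p N P x =
     (let n = N div p; c = real N + (real n + 1) * \<theta> in
      case x of
        None \<Rightarrow> ((real n + 1) * \<theta> + real (card P) * a) / c
      | Some t \<Rightarrow> (if t \<in> P then (real (card t) - a) / c else 0))"

definition crp_insert :: "nat \<Rightarrow> nat set set \<Rightarrow> nat set option \<Rightarrow> nat set set" where
  "crp_insert N P x =
     (case x of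
        None \<Rightarrow> insert {N + 1} P
      | Some t \<Rightarrow> insert (insert (N + 1) t) (P - {t}))"

definition crp_step :: "real \<Rightarrow> real \<Rightarrow> nat \<Rightarrow> nat \<Rightarrow> nat set set \<Rightarrow> nat set set pmf" where
  "crp_step a \<theta> p N P = map_pmf (crp_insert N P) (embed_pmf (crp_weight a \<theta> p N P))"

fun crp :: "real \<Rightarrow> real \<Rightarrow> nat \<Rightarrow> nat \<Rightarrow> nat set set pmf" where
  "crp a \<theta> p 0 = return_pmf {}"
| "crp a \<theta> p (Suc 0) = return_pmf {{1}}"
| "crp a \<theta> p (Suc (Suc N)) = crp a \<theta> p (Suc N) \<bind> crp_step a \<theta> p (Suc N)"

fun crp_path :: "real \<Rightarrow> real \<Rightarrow> nat \<Rightarrow> nat \<Rightarrow> nat set set list pmf" where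
  "crp_path a \<theta> p 0 = return_pmf []"
| "crp_path a \<theta> p (Suc 0) = return_pmf [{{1}}]"
| "crp_path a \<theta> p (Suc (Suc N)) =
     crp_path a \<theta> p (Suc N) \<bind>
       (\<lambda>ps. map_pmf (\<lambda>Q. ps @ [Q]) (crp_step a \<theta> p (Suc N) (last ps)))"

text \<open>Vertices: ordinary nodes Ord i (i \<ge> 1), roots Root j
  (Root 0 is the original root, Root j for j \<ge> 1 is the j-th immigrant root).
  A forest at time N is the list of parents of the ordinary nodes 1..N:
  xs ! (i - 1) is the parent of node i. At time N the roots present are
  Root 0, ..., Root (N div p).\<close>

datatype vertex = Ord nat | Root nat

definition outdeg :: "vertex list \<Rightarrow> vertex \<Rightarrow> nat" where
  "outdeg xs v = card {i \<in> {1..length xs}. xs ! (i - 1) = v}"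

definition gport_weight :: "real \<Rightarrow> real \<Rightarrow> nat \<Rightarrow> vertex list \<Rightarrow> vertex \<Rightarrow> real" where
  "gport_weight \<alpha> l p xs v =
     (let N = length xs; C = (1 + \<alpha>) * real N + (real (N div p) + 1) * l in
      case v of
        Ord i \<Rightarrow> (if 1 \<le> i \<and> i \<le> N then (real (outdeg xs v) + \<alpha>) / C else 0)
      | Root j \<Rightarrow> (if j \<le> N div p then (real (outdeg xs v) + l) / C else 0))"

definition gport_attach :: "real \<Rightarrow> real \<Rightarrow> nat \<Rightarrow> vertex list \<Rightarrow> vertex pmf" where
  "gport_attach \<alpha> l p xs = embed_pmf (gport_weight \<alpha> l p xs)"

fun gport :: "real \<Rightarrow> real \<Rightarrow> nat \<Rightarrow> nat \<Rightarrow> vertex list pmf" where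
  "gport \<alpha> l p 0 = return_pmf []"
| "gport \<alpha> l p (Suc N) =
     gport \<alpha> l p N \<bind> (\<lambda>xs. map_pmf (\<lambda>v. xs @ [v]) (gport_attach \<alpha> l p xs))"

fun gport_path :: "real \<Rightarrow> real \<Rightarrow> nat \<Rightarrow> nat \<Rightarrow> vertex list list pmf" where
  "gport_path \<alpha> l p 0 = return_pmf [[]]"
| "gport_path \<alpha> l p (Suc N) =
     gport_path \<alpha> l p N \<bind>
       (\<lambda>fs. map_pmf (\<lambda>v. fs @ [last fs @ [v]]) (gport_attach \<alpha> l p (last fs)))"

definition ord_edges :: "vertex list \<Rightarrow> (nat \<times> nat) set" where
  "ord_edges xs = {(i, j). i \<in> {1..length xs} \<and> xs ! (i - 1) = Ord j}"

definition branch_partition :: "vertex list \<Rightarrow> nat set set" where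
  "branch_partition xs =
     {{i \<in> {1..length xs}. (i, c) \<in> (ord_edges xs)\<^sup>*} | c.
        c \<in> {1..length xs} \<and> (\<exists>j. xs ! (c - 1) = Root j)}"

end

theory Submission
  imports Defs
begin

text \<open>
  The branch partition groups the nodes according to the child of a root they descend
  from. Attaching the new node to a root opens a new block, attaching it to an ordinary
  node j adds it to the block of j. The ordinary nodes of a block t have total out-degree
  |t| - 1, so t attracts the new node with weight |t| - 1 + |t| \<alpha> = (1 + \<alpha>) (|t| - a);
  the roots have total out-degree m, the number of blocks, so a new block is opened with
  weight m + (n + 1) l = (1 + \<alpha>) (m a + (n + 1) \<theta>). Since C_N = (1 + \<alpha>) c_N, the branch
  partition of the forest is a Markov chain with the transition probabilities of the
  Chinese restaurant process with competition.
\<close>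

lemma single_valued_rtrancl_sink_unique:
  assumes "single_valued r" "(x, a) \<in> r\<^sup>*" "(x, b) \<in> r\<^sup>*" "a \<notin> Domain r" "b \<notin> Domain r"
  shows "a = b"
  using single_valued_confluent[OF assms(1-3)] assms(4,5)
  by (auto elim: converse_rtranclE)

lemma sum_card_fibres:
  assumes "finite A" "finite K"
  shows "(\<Sum>v\<in>A. card {k \<in> K. g k = v}) = card {k \<in> K. g k \<in> A}"
proof -
  have "{k \<in> {k \<in> K. g k \<in> A}. g k = v} = {k \<in> K. g k = v}" if "v \<in> A" for v
    using that by auto
  then have "(\<Sum>v\<in>A. card {k \<in> K. g k = v}) =
      (\<Sum>v\<in>A. \<Sum>k\<in>{k \<in> {k \<in> K. g k \<in> A}. g k = v}. 1)"
    by simp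
  also have "\<dots> = (\<Sum>k\<in>{k \<in> K. g k \<in> A}. 1)"
    using assms by (intro sum.group) auto
  finally show ?thesis by simp
qed

lemma pmf_map_pmf_eq_sum:
  assumes "set_pmf q \<subseteq> S" "finite S"
  shows "pmf (map_pmf f q) y = (\<Sum>x\<in>f -` {y} \<inter> S. pmf q x)"
proof -
  have "f -` {y} \<inter> set_pmf q = (f -` {y} \<inter> S) \<inter> set_pmf q" using assms(1) by blast
  then have "measure_pmf.prob q (f -` {y}) = measure_pmf.prob q (f -` {y} \<inter> S)"
    by (metis measure_Int_set_pmf)
  then show ?thesis using assms(2) by (simp add: pmf_map measure_measure_pmf_finite)
qed

lemma embed_pmf_pmf: "embed_pmf (pmf q) = q"
  by (rule type_definition.Rep_inverse[OF td_pmf_embed_pmf])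


section \<open>Forests and their branches\<close>

definition gport_vertices :: "nat \<Rightarrow> nat \<Rightarrow> vertex set" where
  "gport_vertices p N = Ord ` {1..N} \<union> Root ` {..N div p}"

definition gport_forest :: "nat \<Rightarrow> vertex list \<Rightarrow> bool" where
  \<comment> \<open>\<open>xs ! i\<close> is the parent of node \<open>i + 1\<close>, which is attached at time \<open>i\<close>\<close>
  "gport_forest p xs \<longleftrightarrow> (\<forall>i<length xs. xs ! i \<in> gport_vertices p i)"

definition root_children :: "vertex list \<Rightarrow> nat set" where
  "root_children xs = {c \<in> {1..length xs}. \<exists>j. xs ! (c - 1) = Root j}"

definition branch :: "vertex list \<Rightarrow> nat \<Rightarrow> nat set" where
  "branch xs c = {i \<in> {1..length xs}. (i, c) \<in> (ord_edges xs)\<^sup>*}"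

lemma gport_vertices_mono: "M \<le> N \<Longrightarrow> gport_vertices p M \<subseteq> gport_vertices p N"
  unfolding gport_vertices_def by (intro Un_mono image_mono) (auto intro: div_le_mono)

lemma finite_gport_vertices: "finite (gport_vertices p N)"
  by (simp add: gport_vertices_def)

lemma gport_forest_Nil: "gport_forest p []"
  by (simp add: gport_forest_def)

lemma gport_forest_snoc:
  "gport_forest p (xs @ [v]) \<longleftrightarrow> gport_forest p xs \<and> v \<in> gport_vertices p (length xs)"
proof -
  have "(\<forall>i<length xs. (xs @ [v]) ! i \<in> gport_vertices p i) \<longleftrightarrow> gport_forest p xs"
    by (simp add: gport_forest_def nth_append)
  then show ?thesis
    unfolding gport_forest_def by (auto simp: All_less_Suc)
qed

lemma gport_forest_parent:
  assumes "gport_forest p xs" "i \<in> {1..length xs}"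
  shows "xs ! (i - 1) \<in> gport_vertices p (i - 1)"
  using assms unfolding gport_forest_def by auto

lemma gport_forest_parent_present:
  assumes "gport_forest p xs" "i \<in> {1..length xs}"
  shows "xs ! (i - 1) \<in> gport_vertices p (length xs)"
  using gport_forest_parent[OF assms] gport_vertices_mono[of "i - 1" "length xs" p] assms(2) by force

lemma ord_edges_decreasing:
  assumes "gport_forest p xs" "(i, j) \<in> ord_edges xs"
  shows "1 \<le> j \<and> j < i \<and> i \<le> length xs"
proof -
  have i: "i \<in> {1..length xs}" and parent: "xs ! (i - 1) = Ord j"
    using assms(2) by (auto simp: ord_edges_def)
  have "Ord j \<in> gport_vertices p (i - 1)"
    using gport_forest_parent[OF assms(1) i] parent by simp
  then show ?thesis using i by (auto simp: gport_vertices_def)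
qed

lemma rtrancl_ord_edges_le:
  assumes "gport_forest p xs" "(i, c) \<in> (ord_edges xs)\<^sup>*"
  shows "c \<le> i"
  using assms(2) by induction (auto dest: ord_edges_decreasing[OF assms(1)])

lemma single_valued_ord_edges: "single_valued (ord_edges xs)"
  by (auto simp: single_valued_def ord_edges_def)

lemma root_child_not_Domain: "c \<in> root_children xs \<Longrightarrow> c \<notin> Domain (ord_edges xs)"
  by (auto simp: root_children_def ord_edges_def)

lemma root_child_unique:
  assumes "(i, c) \<in> (ord_edges xs)\<^sup>*" "(i, c') \<in> (ord_edges xs)\<^sup>*"
    and "c \<in> root_children xs" "c' \<in> root_children xs"
  shows "c = c'"
  using single_valued_rtrancl_sink_unique[OF single_valued_ord_edges assms(1,2)]
    root_child_not_Domain[OF assms(3)] root_child_not_Domain[OF assms(4)] .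

lemma exists_root_child:
  assumes "gport_forest p xs" "i \<in> {1..length xs}"
  shows "\<exists>c\<in>root_children xs. (i, c) \<in> (ord_edges xs)\<^sup>*"
  using assms(2)
proof (induction i rule: less_induct)
  case (less i)
  show ?case
  proof (cases "xs ! (i - 1)")
    case (Ord j)
    then have edge: "(i, j) \<in> ord_edges xs"
      using less.prems by (auto simp: ord_edges_def)
    then have "j \<in> {1..length xs}" "j < i"
      using ord_edges_decreasing[OF assms(1)] by fastforce+
    then obtain c where "c \<in> root_children xs" "(j, c) \<in> (ord_edges xs)\<^sup>*"
      using less.IH by blast
    then show ?thesis using edge by (meson converse_rtrancl_into_rtrancl)
  next
    case (Root j)
    then show ?thesis using less.prems by (auto simp: root_children_def)
  qed
qed

lemma branch_partition_eq_image: "branch_partition xs = branch xs ` root_children xs"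
  unfolding branch_partition_def branch_def root_children_def by blast

lemma root_child_in_branch: "c \<in> root_children xs \<Longrightarrow> c \<in> branch xs c"
  unfolding root_children_def branch_def by auto

lemma branch_subset: "branch xs c \<subseteq> {1..length xs}"
  by (auto simp: branch_def)

lemma finite_branch: "finite (branch xs c)"
  by (simp add: branch_def)

lemma branch_unique:
  assumes "i \<in> branch xs c" "i \<in> branch xs c'" "c \<in> root_children xs" "c' \<in> root_children xs"
  shows "c = c'"
  using assms root_child_unique by (auto simp: branch_def)

lemma inj_on_branch: "inj_on (branch xs) (root_children xs)"
  by (metis inj_onI root_child_in_branch branch_unique)

lemma card_branch_partition: "card (branch_partition xs) = card (root_children xs)"
  by (simp add: branch_partition_eq_image card_image[OF inj_on_branch])

lemma ord_edges_snoc: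
  "ord_edges (xs @ [v]) =
     ord_edges xs \<union> (case v of Ord j \<Rightarrow> {(Suc (length xs), j)} | Root _ \<Rightarrow> {})"
  unfolding ord_edges_def
  by (auto simp: nth_append le_Suc_eq split: vertex.splits if_splits)

lemma root_children_snoc:
  "root_children (xs @ [v]) =
     root_children xs \<union> (case v of Root _ \<Rightarrow> {Suc (length xs)} | Ord _ \<Rightarrow> {})"
  unfolding root_children_def by (auto simp: nth_append le_Suc_eq split: vertex.splits)

lemma rtrancl_ord_edges_snoc_old:
  assumes "gport_forest p xs" "i \<le> length xs"
  shows "(i, c) \<in> (ord_edges (xs @ [v]))\<^sup>* \<longleftrightarrow> (i, c) \<in> (ord_edges xs)\<^sup>*"
proof
  assume "(i, c) \<in> (ord_edges (xs @ [v]))\<^sup>*"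
  then show "(i, c) \<in> (ord_edges xs)\<^sup>*"
    using assms(2)
  proof (induction rule: converse_rtrancl_induct)
    case (step y z)
    then have "(y, z) \<in> ord_edges xs"
      by (auto simp: ord_edges_snoc split: vertex.splits)
    then show ?case
      using step ord_edges_decreasing[OF assms(1)]
      by (meson converse_rtrancl_into_rtrancl less_imp_le_nat order.strict_trans2)
  qed simp
next
  assume "(i, c) \<in> (ord_edges xs)\<^sup>*"
  then show "(i, c) \<in> (ord_edges (xs @ [v]))\<^sup>*"
    by (rule rtrancl_mono[THEN subsetD, rotated]) (auto simp: ord_edges_snoc)
qed

lemma rtrancl_ord_edges_snoc_new:
  assumes "gport_forest p (xs @ [v])"
  shows "(Suc (length xs), c) \<in> (ord_edges (xs @ [v]))\<^sup>* \<longleftrightarrow>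
     c = Suc (length xs) \<or> (\<exists>j. v = Ord j \<and> (j, c) \<in> (ord_edges xs)\<^sup>*)"
proof -
  have forest: "gport_forest p xs" and v: "v \<in> gport_vertices p (length xs)"
    using assms by (auto simp: gport_forest_snoc)
  have new_edge: "(Suc (length xs), y) \<in> ord_edges (xs @ [v]) \<longleftrightarrow> v = Ord y" for y
    using ord_edges_decreasing[OF forest] by (fastforce simp: ord_edges_snoc split: vertex.splits)
  have old: "(j, c) \<in> (ord_edges (xs @ [v]))\<^sup>* \<longleftrightarrow> (j, c) \<in> (ord_edges xs)\<^sup>*" if "v = Ord j" for j
    using that v rtrancl_ord_edges_snoc_old[OF forest] by (auto simp: gport_vertices_def)
  show ?thesis
  proof
    assume "(Suc (length xs), c) \<in> (ord_edges (xs @ [v]))\<^sup>*"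
    then show "c = Suc (length xs) \<or> (\<exists>j. v = Ord j \<and> (j, c) \<in> (ord_edges xs)\<^sup>*)"
    proof (cases rule: converse_rtranclE)
      case (step y)
      then have "v = Ord y" using new_edge by blast
      then show ?thesis using step(2) old by blast
    qed simp
  next
    assume "c = Suc (length xs) \<or> (\<exists>j. v = Ord j \<and> (j, c) \<in> (ord_edges xs)\<^sup>*)"
    then show "(Suc (length xs), c) \<in> (ord_edges (xs @ [v]))\<^sup>*"
    proof
      assume "\<exists>j. v = Ord j \<and> (j, c) \<in> (ord_edges xs)\<^sup>*"
      then obtain j where "v = Ord j" "(j, c) \<in> (ord_edges xs)\<^sup>*" by blast
      then show ?thesis
        using new_edge[of j] old[of j] by (blast intro: converse_rtrancl_into_rtrancl)
    qed simp
  qed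
qed

lemma branch_snoc_old:
  assumes "gport_forest p (xs @ [v])" "c \<in> root_children xs"
  shows "branch (xs @ [v]) c =
     branch xs c \<union> (if \<exists>j. v = Ord j \<and> (j, c) \<in> (ord_edges xs)\<^sup>* then {Suc (length xs)} else {})"
proof -
  have "gport_forest p xs" using assms(1) by (simp add: gport_forest_snoc)
  moreover have "c \<noteq> Suc (length xs)" using assms(2) by (auto simp: root_children_def)
  ultimately show ?thesis
    unfolding branch_def using rtrancl_ord_edges_snoc_old rtrancl_ord_edges_snoc_new[OF assms(1), of c]
    by (auto simp: le_Suc_eq)
qed

lemma branch_snoc_new:
  assumes "gport_forest p (xs @ [v])"
  shows "branch (xs @ [v]) (Suc (length xs)) = {Suc (length xs)}"
  using rtrancl_ord_edges_le[OF assms] by (fastforce simp: branch_def)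

definition crp_outcome :: "vertex list \<Rightarrow> vertex \<Rightarrow> nat set option" where
  "crp_outcome xs v =
     (case v of Root _ \<Rightarrow> None | Ord j \<Rightarrow> Some (THE t. t \<in> branch_partition xs \<and> j \<in> t))"

lemma crp_outcome_Ord:
  assumes "gport_forest p xs" "j \<in> {1..length xs}"
    and "c \<in> root_children xs" "(j, c) \<in> (ord_edges xs)\<^sup>*"
  shows "crp_outcome xs (Ord j) = Some (branch xs c)"
proof -
  have "(THE t. t \<in> branch_partition xs \<and> j \<in> t) = branch xs c"
  proof (rule the_equality)
    show "branch xs c \<in> branch_partition xs \<and> j \<in> branch xs c"
      using assms by (auto simp: branch_partition_eq_image branch_def)
  next
    fix t assume "t \<in> branch_partition xs \<and> j \<in> t"
    then obtain c' where "c' \<in> root_children xs" "t = branch xs c'" "j \<in> branch xs c'"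
      by (auto simp: branch_partition_eq_image)
    moreover have "j \<in> branch xs c" using assms by (simp add: branch_def)
    ultimately show "t = branch xs c" using branch_unique assms(3) by blast
  qed
  then show ?thesis by (simp add: crp_outcome_def)
qed

lemma branch_partition_snoc:
  assumes "gport_forest p (xs @ [v])"
  shows "branch_partition (xs @ [v]) = crp_insert (length xs) (branch_partition xs) (crp_outcome xs v)"
proof -
  have forest: "gport_forest p xs" and v: "v \<in> gport_vertices p (length xs)"
    using assms by (auto simp: gport_forest_snoc)
  show ?thesis
  proof (cases v)
    case (Root j)
    have unchanged: "branch (xs @ [v]) ` root_children xs = branch_partition xs"
      using branch_snoc_old[OF assms] Root
      by (auto simp: branch_partition_eq_image intro!: image_cong)
    have "branch_partition (xs @ [v]) =
        insert (branch (xs @ [v]) (Suc (length xs))) (branch (xs @ [v]) ` root_children xs)"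
      using Root by (simp add: branch_partition_eq_image root_children_snoc)
    also have "\<dots> = insert {Suc (length xs)} (branch_partition xs)"
      by (simp only: unchanged branch_snoc_new[OF assms])
    finally show ?thesis using Root by (simp add: crp_outcome_def crp_insert_def)
  next
    case (Ord j)
    then have j: "j \<in> {1..length xs}" using v by (auto simp: gport_vertices_def)
    obtain c where c: "c \<in> root_children xs" "(j, c) \<in> (ord_edges xs)\<^sup>*"
      using exists_root_child[OF forest j] by blast
    define others where "others = root_children xs - {c}"
    have joined: "branch (xs @ [v]) c = insert (Suc (length xs)) (branch xs c)"
      using branch_snoc_old[OF assms c(1)] Ord c by auto
    have "branch (xs @ [v]) ` others = branch xs ` others"
      using branch_snoc_old[OF assms] Ord root_child_unique[OF c(2) _ c(1)]
      by (intro image_cong) (auto simp: others_def)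
    also have "\<dots> = branch_partition xs - {branch xs c}"
      using inj_on_branch[of xs] c(1)
      by (auto simp: others_def inj_on_def branch_partition_eq_image)
    finally have untouched: "branch (xs @ [v]) ` others = branch_partition xs - {branch xs c}" .
    have "branch_partition (xs @ [v]) = insert (branch (xs @ [v]) c) (branch (xs @ [v]) ` others)"
      using Ord c(1) by (auto simp: branch_partition_eq_image root_children_snoc others_def)
    also have "\<dots> = insert (insert (Suc (length xs)) (branch xs c)) (branch_partition xs - {branch xs c})"
      by (simp only: joined untouched)
    finally show ?thesis
      using Ord crp_outcome_Ord[OF forest j c] by (simp add: crp_insert_def)
  qed
qed

lemma crp_outcome_preimage_None:
  "crp_outcome xs -` {None} \<inter> gport_vertices p N = Root ` {..N div p}"
  by (auto simp: crp_outcome_def gport_vertices_def split: vertex.splits)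

lemma crp_outcome_preimage_Some:
  assumes "gport_forest p xs"
  shows "crp_outcome xs -` {Some t} \<inter> gport_vertices p (length xs) =
     (if t \<in> branch_partition xs then Ord ` t else {})"
proof -
  have outcome: "crp_outcome xs (Ord i) = Some t \<longleftrightarrow> t \<in> branch_partition xs \<and> i \<in> t"
    if i: "i \<in> {1..length xs}" for i
  proof -
    obtain c where c: "c \<in> root_children xs" "(i, c) \<in> (ord_edges xs)\<^sup>*"
      using exists_root_child[OF assms i] by blast
    then have "i \<in> branch xs c" using i by (simp add: branch_def)
    then have "t \<in> branch_partition xs \<and> i \<in> t \<longleftrightarrow> t = branch xs c"
      using c(1) branch_unique by (auto simp: branch_partition_eq_image)
    then show ?thesis using crp_outcome_Ord[OF assms i c] by auto
  qed
  have sub: "t \<subseteq> {1..length xs}" if "t \<in> branch_partition xs"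
    using that branch_subset by (auto simp: branch_partition_eq_image)
  have "v \<in> crp_outcome xs -` {Some t} \<longleftrightarrow> v \<in> (if t \<in> branch_partition xs then Ord ` t else {})"
    if "v \<in> gport_vertices p (length xs)" for v
  proof (cases v)
    case (Ord i)
    then show ?thesis using that outcome[of i] sub by (auto simp: gport_vertices_def)
  qed (auto simp: crp_outcome_def)
  moreover have "(if t \<in> branch_partition xs then Ord ` t else {}) \<subseteq> gport_vertices p (length xs)"
    using sub by (auto simp: gport_vertices_def)
  ultimately show ?thesis by blast
qed


section \<open>Attachment weights\<close>

lemma sum_outdeg:
  "finite A \<Longrightarrow> (\<Sum>v\<in>A. outdeg xs v) = card {k \<in> {1..length xs}. xs ! (k - 1) \<in> A}"
  unfolding outdeg_def by (rule sum_card_fibres) auto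

lemma sum_outdeg_gport_vertices:
  assumes "gport_forest p xs"
  shows "(\<Sum>v\<in>gport_vertices p (length xs). outdeg xs v) = length xs"
proof -
  have "{k \<in> {1..length xs}. xs ! (k - 1) \<in> gport_vertices p (length xs)} = {1..length xs}"
    using gport_forest_parent_present[OF assms] by auto
  then show ?thesis by (simp add: sum_outdeg finite_gport_vertices)
qed

lemma sum_outdeg_roots:
  assumes "gport_forest p xs"
  shows "(\<Sum>v\<in>Root ` {..length xs div p}. outdeg xs v) = card (root_children xs)"
proof -
  have "{k \<in> {1..length xs}. xs ! (k - 1) \<in> Root ` {..length xs div p}} = root_children xs"
    using gport_forest_parent_present[OF assms]
    by (fastforce simp: root_children_def gport_vertices_def)
  then show ?thesis by (simp add: sum_outdeg)
qed

text \<open>Every node of a branch other than its top has its parent inside the branch.\<close>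

lemma sum_outdeg_branch:
  assumes "gport_forest p xs" "c \<in> root_children xs"
  shows "(\<Sum>v\<in>Ord ` branch xs c. outdeg xs v) = card (branch xs c) - 1"
proof -
  have "{k \<in> {1..length xs}. xs ! (k - 1) \<in> Ord ` branch xs c} = branch xs c - {c}"
  proof (intro equalityI subsetI)
    fix k assume k: "k \<in> {k \<in> {1..length xs}. xs ! (k - 1) \<in> Ord ` branch xs c}"
    then obtain i where i: "xs ! (k - 1) = Ord i" "i \<in> branch xs c" by auto
    then have "(k, i) \<in> ord_edges xs" using k by (auto simp: ord_edges_def)
    then have "(k, c) \<in> (ord_edges xs)\<^sup>*"
      using i(2) by (auto simp: branch_def intro: converse_rtrancl_into_rtrancl)
    moreover have "k \<noteq> c" using assms(2) i(1) by (auto simp: root_children_def)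
    ultimately show "k \<in> branch xs c - {c}" using k by (auto simp: branch_def)
  next
    fix k assume k: "k \<in> branch xs c - {c}"
    then have "(k, c) \<in> (ord_edges xs)\<^sup>*" "k \<noteq> c" by (auto simp: branch_def)
    then obtain y where y: "(k, y) \<in> ord_edges xs" "(y, c) \<in> (ord_edges xs)\<^sup>*"
      by (auto elim: converse_rtranclE)
    then have "y \<in> branch xs c"
      using ord_edges_decreasing[OF assms(1) y(1)] by (auto simp: branch_def)
    moreover have "xs ! (k - 1) = Ord y" using y(1) by (auto simp: ord_edges_def)
    ultimately show "k \<in> {k \<in> {1..length xs}. xs ! (k - 1) \<in> Ord ` branch xs c}"
      using k by (auto simp: branch_def)
  qed
  then show ?thesis
    using root_child_in_branch[OF assms(2)] by (simp add: sum_outdeg finite_branch)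
qed

definition gport_total_weight :: "real \<Rightarrow> real \<Rightarrow> nat \<Rightarrow> nat \<Rightarrow> real" where
  "gport_total_weight \<alpha> l p N = (1 + \<alpha>) * real N + (real (N div p) + 1) * l"

lemma gport_total_weight_pos: "0 \<le> \<alpha> \<Longrightarrow> 0 < l \<Longrightarrow> 0 < gport_total_weight \<alpha> l p N"
  unfolding gport_total_weight_def by (intro add_nonneg_pos) auto

lemma gport_weight_Ord:
  "gport_weight \<alpha> l p xs (Ord i) =
     (if i \<in> {1..length xs}
      then (real (outdeg xs (Ord i)) + \<alpha>) / gport_total_weight \<alpha> l p (length xs) else 0)"
  by (simp add: gport_weight_def gport_total_weight_def Let_def)

lemma gport_weight_Root:
  "gport_weight \<alpha> l p xs (Root j) =
     (if j \<le> length xs div p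
      then (real (outdeg xs (Root j)) + l) / gport_total_weight \<alpha> l p (length xs) else 0)"
  by (simp add: gport_weight_def gport_total_weight_def Let_def)

lemma gport_weight_nonneg: "0 \<le> \<alpha> \<Longrightarrow> 0 < l \<Longrightarrow> 0 \<le> gport_weight \<alpha> l p xs v"
  using gport_total_weight_pos[of \<alpha> l p "length xs"]
  by (cases v) (auto simp: gport_weight_Ord gport_weight_Root)

lemma gport_weight_outside:
  "v \<notin> gport_vertices p (length xs) \<Longrightarrow> gport_weight \<alpha> l p xs v = 0"
  by (cases v) (auto simp: gport_weight_Ord gport_weight_Root gport_vertices_def)

lemma sum_gport_weight_Ord:
  assumes "A \<subseteq> {1..length xs}"
  shows "(\<Sum>v\<in>Ord ` A. gport_weight \<alpha> l p xs v) =
     (real (\<Sum>v\<in>Ord ` A. outdeg xs v) + real (card A) * \<alpha>) / gport_total_weight \<alpha> l p (length xs)"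
proof -
  have "(\<Sum>v\<in>Ord ` A. gport_weight \<alpha> l p xs v) =
      (\<Sum>v\<in>Ord ` A. (real (outdeg xs v) + \<alpha>) / gport_total_weight \<alpha> l p (length xs))"
    using assms by (intro sum.cong) (auto simp: gport_weight_Ord)
  then show ?thesis
    by (simp add: sum_divide_distrib[symmetric] sum.distrib card_image inj_on_def)
qed

lemma sum_gport_weight_Root:
  "(\<Sum>v\<in>Root ` {..length xs div p}. gport_weight \<alpha> l p xs v) =
     (real (\<Sum>v\<in>Root ` {..length xs div p}. outdeg xs v) + (real (length xs div p) + 1) * l)
       / gport_total_weight \<alpha> l p (length xs)"
proof -
  have "(\<Sum>v\<in>Root ` {..length xs div p}. gport_weight \<alpha> l p xs v) =
      (\<Sum>v\<in>Root ` {..length xs div p}. (real (outdeg xs v) + l) / gport_total_weight \<alpha> l p (length xs))"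
    by (intro sum.cong) (auto simp: gport_weight_Root)
  then show ?thesis
    by (simp add: sum_divide_distrib[symmetric] sum.distrib card_image inj_on_def)
qed

lemma sum_gport_weight:
  assumes "0 \<le> \<alpha>" "0 < l" "gport_forest p xs"
  shows "(\<Sum>v\<in>gport_vertices p (length xs). gport_weight \<alpha> l p xs v) = 1"
proof -
  let ?N = "length xs"
  have split: "(\<Sum>v\<in>gport_vertices p ?N. f v) = (\<Sum>v\<in>Ord ` {1..?N}. f v) + (\<Sum>v\<in>Root ` {..?N div p}. f v)"
    for f :: "vertex \<Rightarrow> real"
    unfolding gport_vertices_def by (rule sum.union_disjoint) auto
  have "(\<Sum>v\<in>Ord ` {1..?N}. real (outdeg xs v)) + (\<Sum>v\<in>Root ` {..?N div p}. real (outdeg xs v)) = ?N"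
    using arg_cong[where f = real, OF sum_outdeg_gport_vertices[OF assms(3)]]
      split[of "\<lambda>v. real (outdeg xs v)"] by simp
  then have "(\<Sum>v\<in>gport_vertices p ?N. gport_weight \<alpha> l p xs v) =
      gport_total_weight \<alpha> l p ?N / gport_total_weight \<alpha> l p ?N"
    unfolding split sum_gport_weight_Ord[OF order_refl] sum_gport_weight_Root
    by (simp add: add_divide_distrib[symmetric] gport_total_weight_def algebra_simps)
  then show ?thesis
    using gport_total_weight_pos[OF assms(1,2), of p ?N] by (metis divide_self less_irrefl)
qed

lemma nn_integral_gport_weight:
  assumes "0 \<le> \<alpha>" "0 < l" "gport_forest p xs"
  shows "(\<integral>\<^sup>+v. ennreal (gport_weight \<alpha> l p xs v) \<partial>count_space UNIV) = 1"
proof -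
  have "(\<integral>\<^sup>+v. ennreal (gport_weight \<alpha> l p xs v) \<partial>count_space UNIV) =
      (\<Sum>v\<in>gport_vertices p (length xs). ennreal (gport_weight \<alpha> l p xs v))"
    by (rule nn_integral_count_space') (auto simp: finite_gport_vertices gport_weight_outside)
  then show ?thesis
    using sum_gport_weight[OF assms] gport_weight_nonneg[OF assms(1,2)] by simp
qed

lemma pmf_gport_attach:
  "0 \<le> \<alpha> \<Longrightarrow> 0 < l \<Longrightarrow> gport_forest p xs \<Longrightarrow>
    pmf (gport_attach \<alpha> l p xs) v = gport_weight \<alpha> l p xs v"
  unfolding gport_attach_def by (rule pmf_embed_pmf[OF gport_weight_nonneg nn_integral_gport_weight])

lemma set_pmf_gport_attach:
  assumes "0 \<le> \<alpha>" "0 < l" "gport_forest p xs"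
  shows "set_pmf (gport_attach \<alpha> l p xs) \<subseteq> gport_vertices p (length xs)"
  using gport_weight_outside
  unfolding gport_attach_def
    set_embed_pmf[OF gport_weight_nonneg[OF assms(1,2)] nn_integral_gport_weight[OF assms]]
  by blast


section \<open>The branch partition process\<close>

lemma crp_weight_None_rescaled:
  assumes "\<beta> \<noteq> 0" "a = 1 / \<beta>" "\<theta> = l / \<beta>"
  shows "crp_weight a \<theta> p N P None =
     (real (card P) + (real (N div p) + 1) * l) / (\<beta> * real N + (real (N div p) + 1) * l)"
proof -
  have "real N + (real (N div p) + 1) * \<theta> = (\<beta> * real N + (real (N div p) + 1) * l) / \<beta>"
    and "(real (N div p) + 1) * \<theta> + real (card P) * a = (real (card P) + (real (N div p) + 1) * l) / \<beta>"
    unfolding assms(2,3) using assms(1) by (simp_all add: field_simps)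
  then show ?thesis using assms(1) by (simp add: crp_weight_def Let_def)
qed

lemma crp_weight_Some_rescaled:
  assumes "\<beta> \<noteq> 0" "a = 1 / \<beta>" "\<theta> = l / \<beta>"
  shows "crp_weight a \<theta> p N P (Some t) =
     (if t \<in> P then (real (card t) * \<beta> - 1) / (\<beta> * real N + (real (N div p) + 1) * l) else 0)"
proof -
  have "real N + (real (N div p) + 1) * \<theta> = (\<beta> * real N + (real (N div p) + 1) * l) / \<beta>"
    and "real (card t) - a = (real (card t) * \<beta> - 1) / \<beta>"
    unfolding assms(2,3) using assms(1) by (simp_all add: field_simps)
  then show ?thesis using assms(1) by (simp add: crp_weight_def Let_def)
qed

lemma crp_weight_eq_pmf_crp_outcome:
  assumes "0 \<le> \<alpha>" "0 < l" "gport_forest p xs" "a = 1 / (1 + \<alpha>)" "\<theta> = l / (1 + \<alpha>)"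
  shows "crp_weight a \<theta> p (length xs) (branch_partition xs) x =
     pmf (map_pmf (crp_outcome xs) (gport_attach \<alpha> l p xs)) x"
proof -
  let ?N = "length xs" and ?C = "gport_total_weight \<alpha> l p (length xs)"
  have pmf_outcome: "pmf (map_pmf (crp_outcome xs) (gport_attach \<alpha> l p xs)) y =
      (\<Sum>v\<in>crp_outcome xs -` {y} \<inter> gport_vertices p ?N. gport_weight \<alpha> l p xs v)" for y
    using pmf_map_pmf_eq_sum[OF set_pmf_gport_attach[OF assms(1-3)] finite_gport_vertices]
    by (simp add: pmf_gport_attach[OF assms(1-3)])
  have \<beta>: "1 + \<alpha> \<noteq> 0" using assms(1) by simp
  show ?thesis
  proof (cases x)
    case None
    have "pmf (map_pmf (crp_outcome xs) (gport_attach \<alpha> l p xs)) None =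
        (\<Sum>v\<in>Root ` {..?N div p}. gport_weight \<alpha> l p xs v)"
      by (simp only: pmf_outcome crp_outcome_preimage_None)
    also have "\<dots> = (real (card (branch_partition xs)) + (real (?N div p) + 1) * l) / ?C"
      by (simp add: sum_gport_weight_Root sum_outdeg_roots[OF assms(3)] card_branch_partition)
    also have "\<dots> = crp_weight a \<theta> p ?N (branch_partition xs) None"
      by (simp only: crp_weight_None_rescaled[OF \<beta> assms(4,5)] gport_total_weight_def)
    finally show ?thesis using None by simp
  next
    case (Some t)
    show ?thesis
    proof (cases "t \<in> branch_partition xs")
      case True
      then obtain c where c: "c \<in> root_children xs" "t = branch xs c"
        by (auto simp: branch_partition_eq_image)
      then have "card t \<ge> 1"
        using root_child_in_branch[OF c(1)] finite_branch[of xs c] by (simp add: Suc_le_eq card_gt_0_iff) blast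
      have "pmf (map_pmf (crp_outcome xs) (gport_attach \<alpha> l p xs)) (Some t) =
          (\<Sum>v\<in>Ord ` t. gport_weight \<alpha> l p xs v)"
        using True by (simp only: pmf_outcome crp_outcome_preimage_Some[OF assms(3)] if_True)
      also have "\<dots> = (real (card t - 1) + real (card t) * \<alpha>) / ?C"
        using c branch_subset sum_outdeg_branch[OF assms(3) c(1)] by (simp add: sum_gport_weight_Ord)
      also have "\<dots> = (real (card t) * (1 + \<alpha>) - 1) / ?C"
        using \<open>card t \<ge> 1\<close> by (simp add: of_nat_diff algebra_simps)
      also have "\<dots> = crp_weight a \<theta> p ?N (branch_partition xs) (Some t)"
        using True
        by (simp only: crp_weight_Some_rescaled[OF \<beta> assms(4,5)] gport_total_weight_def if_True)
      finally show ?thesis using Some by simp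
    next
      case False
      then show ?thesis
        using Some crp_weight_Some_rescaled[OF \<beta> assms(4,5)]
        by (simp add: pmf_outcome crp_outcome_preimage_Some[OF assms(3)])
    qed
  qed
qed

lemma map_pmf_branch_partition_gport_attach:
  assumes "0 \<le> \<alpha>" "0 < l" "gport_forest p xs" "a = 1 / (1 + \<alpha>)" "\<theta> = l / (1 + \<alpha>)"
  shows "map_pmf (\<lambda>v. branch_partition (xs @ [v])) (gport_attach \<alpha> l p xs) =
     crp_step a \<theta> p (length xs) (branch_partition xs)"
proof -
  have "embed_pmf (crp_weight a \<theta> p (length xs) (branch_partition xs)) =
      map_pmf (crp_outcome xs) (gport_attach \<alpha> l p xs)"
  proof -
    have "crp_weight a \<theta> p (length xs) (branch_partition xs) =
        pmf (map_pmf (crp_outcome xs) (gport_attach \<alpha> l p xs))"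
      using crp_weight_eq_pmf_crp_outcome[OF assms] by (rule ext)
    then show ?thesis by (simp add: embed_pmf_pmf)
  qed
  then have "crp_step a \<theta> p (length xs) (branch_partition xs) =
      map_pmf (\<lambda>v. crp_insert (length xs) (branch_partition xs) (crp_outcome xs v)) (gport_attach \<alpha> l p xs)"
    by (simp add: crp_step_def map_pmf_comp)
  also have "\<dots> = map_pmf (\<lambda>v. branch_partition (xs @ [v])) (gport_attach \<alpha> l p xs)"
    using set_pmf_gport_attach[OF assms(1-3)] assms(3)
    by (intro map_pmf_cong refl) (metis branch_partition_snoc gport_forest_snoc subsetD)
  finally show ?thesis by simp
qed

lemma set_pmf_gport:
  assumes "0 \<le> \<alpha>" "0 < l" "xs \<in> set_pmf (gport \<alpha> l p N)"
  shows "gport_forest p xs \<and> length xs = N"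
  using assms(3)
proof (induction N arbitrary: xs)
  case 0
  then show ?case by (simp add: gport_forest_Nil)
next
  case (Suc N)
  then obtain ys v where ys: "ys \<in> set_pmf (gport \<alpha> l p N)"
    and v: "v \<in> set_pmf (gport_attach \<alpha> l p ys)" and xs: "xs = ys @ [v]"
    by auto
  have "gport_forest p ys" "length ys = N" using Suc.IH[OF ys] by auto
  then show ?case
    using set_pmf_gport_attach[OF assms(1,2)] v xs by (auto simp: gport_forest_snoc)
qed

lemma branch_partition_singleton:
  assumes "v \<in> gport_vertices p 0"
  shows "branch_partition [v] = {{1}}"
proof -
  have "gport_forest p ([] @ [v])" using assms gport_forest_snoc[of p "[]" v] gport_forest_Nil by simp
  moreover have "crp_outcome [] v = None" using assms by (auto simp: gport_vertices_def crp_outcome_def)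
  moreover have "branch_partition [] = {}" by (simp add: branch_partition_def)
  ultimately show ?thesis using branch_partition_snoc by (fastforce simp: crp_insert_def)
qed

lemma map_pmf_branch_partition_gport_Suc:
  assumes "0 \<le> \<alpha>" "0 < l" "a = 1 / (1 + \<alpha>)" "\<theta> = l / (1 + \<alpha>)"
  shows "map_pmf branch_partition (gport \<alpha> l p (Suc N)) =
     map_pmf branch_partition (gport \<alpha> l p N) \<bind> crp_step a \<theta> p N"
proof -
  have "map_pmf branch_partition (gport \<alpha> l p (Suc N)) =
      gport \<alpha> l p N \<bind> (\<lambda>xs. map_pmf (\<lambda>v. branch_partition (xs @ [v])) (gport_attach \<alpha> l p xs))"
    by (simp add: map_bind_pmf map_pmf_comp)
  also have "\<dots> = gport \<alpha> l p N \<bind> (\<lambda>xs. crp_step a \<theta> p N (branch_partition xs))"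
    using set_pmf_gport[OF assms(1,2)] map_pmf_branch_partition_gport_attach[OF assms(1,2) _ assms(3,4)]
    by (intro bind_pmf_cong) auto
  also have "\<dots> = map_pmf branch_partition (gport \<alpha> l p N) \<bind> crp_step a \<theta> p N"
    by (simp add: bind_map_pmf)
  finally show ?thesis .
qed

lemma map_pmf_branch_partition_gport:
  assumes "0 \<le> \<alpha>" "0 < l" "a = 1 / (1 + \<alpha>)" "\<theta> = l / (1 + \<alpha>)"
  shows "map_pmf branch_partition (gport \<alpha> l p (Suc N)) = crp a \<theta> p (Suc N)"
proof (induction N)
  case 0
  have "map_pmf branch_partition (gport \<alpha> l p 1) =
      map_pmf (\<lambda>v. branch_partition [v]) (gport_attach \<alpha> l p [])"
    by (simp add: map_pmf_comp bind_return_pmf)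
  also have "\<dots> = map_pmf (\<lambda>_. {{1}}) (gport_attach \<alpha> l p [])"
    using set_pmf_gport_attach[OF assms(1,2) gport_forest_Nil[of p]]
    by (intro map_pmf_cong refl) (auto simp: branch_partition_singleton)
  finally show ?case by simp
next
  case (Suc N)
  then show ?case by (simp only: map_pmf_branch_partition_gport_Suc[OF assms] crp.simps(3))
qed

lemma set_pmf_gport_path:
  "fs \<in> set_pmf (gport_path \<alpha> l p N) \<Longrightarrow> length fs = Suc N \<and> last fs \<in> set_pmf (gport \<alpha> l p N)"
proof (induction N arbitrary: fs)
  case (Suc N)
  then obtain gs v where "gs \<in> set_pmf (gport_path \<alpha> l p N)"
    and "v \<in> set_pmf (gport_attach \<alpha> l p (last gs))" and "fs = gs @ [last gs @ [v]]"
    by auto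
  with Suc.IH show ?case by auto
qed simp

lemma map_pmf_branch_partitions_gport_path_Suc:
  assumes "0 \<le> \<alpha>" "0 < l" "a = 1 / (1 + \<alpha>)" "\<theta> = l / (1 + \<alpha>)"
  defines "bps \<equiv> \<lambda>fs. map branch_partition (tl fs)"
  shows "map_pmf bps (gport_path \<alpha> l p (Suc (Suc N))) =
     map_pmf bps (gport_path \<alpha> l p (Suc N)) \<bind>
       (\<lambda>ps. map_pmf (\<lambda>Q. ps @ [Q]) (crp_step a \<theta> p (Suc N) (last ps)))"
proof -
  have step: "map_pmf (\<lambda>v. bps (fs @ [last fs @ [v]])) (gport_attach \<alpha> l p (last fs)) =
      map_pmf (\<lambda>Q. bps fs @ [Q]) (crp_step a \<theta> p (Suc N) (last (bps fs)))"
    if "fs \<in> set_pmf (gport_path \<alpha> l p (Suc N))" for fs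
  proof -
    have "length fs = Suc (Suc N)" and last: "last fs \<in> set_pmf (gport \<alpha> l p (Suc N))"
      using set_pmf_gport_path that by blast+
    then have "fs \<noteq> []" "tl fs \<noteq> []" by (auto simp: length_Suc_conv)
    then have snoc: "bps (fs @ [ys]) = bps fs @ [branch_partition ys]"
      and last_bps: "last (bps fs) = branch_partition (last fs)" for ys
      by (auto simp: bps_def last_map last_tl tl_append2)
    have "map_pmf (\<lambda>v. bps (fs @ [last fs @ [v]])) (gport_attach \<alpha> l p (last fs)) =
        map_pmf (\<lambda>Q. bps fs @ [Q])
          (map_pmf (\<lambda>v. branch_partition (last fs @ [v])) (gport_attach \<alpha> l p (last fs)))"
      by (simp add: snoc map_pmf_comp)
    also have "\<dots> = map_pmf (\<lambda>Q. bps fs @ [Q]) (crp_step a \<theta> p (Suc N) (last (bps fs)))"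
      using map_pmf_branch_partition_gport_attach[OF assms(1,2) _ assms(3,4), where xs = "last fs"]
        set_pmf_gport[OF assms(1,2) last]
      by (simp add: last_bps)
    finally show ?thesis .
  qed
  have "map_pmf bps (gport_path \<alpha> l p (Suc (Suc N))) =
      gport_path \<alpha> l p (Suc N) \<bind>
        (\<lambda>fs. map_pmf (\<lambda>v. bps (fs @ [last fs @ [v]])) (gport_attach \<alpha> l p (last fs)))"
    by (simp add: map_bind_pmf map_pmf_comp)
  also have "\<dots> = gport_path \<alpha> l p (Suc N) \<bind>
      (\<lambda>fs. map_pmf (\<lambda>Q. bps fs @ [Q]) (crp_step a \<theta> p (Suc N) (last (bps fs))))"
    using step by (rule bind_pmf_cong[OF refl])
  also have "\<dots> = map_pmf bps (gport_path \<alpha> l p (Suc N)) \<bind>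
      (\<lambda>ps. map_pmf (\<lambda>Q. ps @ [Q]) (crp_step a \<theta> p (Suc N) (last ps)))"
    by (simp add: bind_map_pmf)
  finally show ?thesis .
qed

lemma map_pmf_branch_partitions_gport_path:
  assumes "0 \<le> \<alpha>" "0 < l" "a = 1 / (1 + \<alpha>)" "\<theta> = l / (1 + \<alpha>)"
  shows "map_pmf (\<lambda>fs. map branch_partition (tl fs)) (gport_path \<alpha> l p (Suc N)) =
     crp_path a \<theta> p (Suc N)"
proof (induction N)
  case 0
  have "map_pmf (\<lambda>fs. map branch_partition (tl fs)) (gport_path \<alpha> l p 1) =
      map_pmf (\<lambda>v. [branch_partition [v]]) (gport_attach \<alpha> l p [])"
    by (simp add: map_pmf_comp bind_return_pmf)
  also have "\<dots> = map_pmf (\<lambda>_. [{{1}}]) (gport_attach \<alpha> l p [])"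
    using set_pmf_gport_attach[OF assms(1,2) gport_forest_Nil[of p]]
    by (intro map_pmf_cong refl) (auto simp: branch_partition_singleton)
  finally show ?case by simp
next
  case (Suc N)
  then show ?case
    by (simp only: map_pmf_branch_partitions_gport_path_Suc[OF assms] crp_path.simps(3))
qed

theorem mainTheorem11:
  fixes \<alpha> l a \<theta> :: real and p N :: nat
  assumes "\<alpha> > 0" and "l > 0" and "p \<ge> 1"
    and "a = 1 / (1 + \<alpha>)" and "\<theta> = l / (1 + \<alpha>)"
    and "N \<ge> 1"
  shows "map_pmf branch_partition (gport \<alpha> l p N) = crp a \<theta> p N
         \<and> map_pmf (\<lambda>fs. map branch_partition (tl fs)) (gport_path \<alpha> l p N) = crp_path a \<theta> p N"
proof -
  obtain M where "N = Suc M" using \<open>N \<ge> 1\<close> by (cases N) auto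
  moreover have "0 \<le> \<alpha>" using \<open>\<alpha> > 0\<close> by simp
  ultimately show ?thesis
    using map_pmf_branch_partition_gport map_pmf_branch_partitions_gport_path assms(2,4,5)
    by blast
qed

end
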